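(* Let $c>0$, $f_s>0$, let $M,N,K\ge1$ be integers, $T_{\max}=(N-1)/f_s$, and $\bm{r}^{\mathrm{mic}}_1,\dots,\bm{r}^{\mathrm{mic}}_M\in\mathbb{R}^3$ with $E_M=\{\bm{r}^{\mathrm{mic}}_m\}$. Let $\kappa=\kappa^{\mathrm{lp}}$ where $\kappa^{\mathrm{lp}}(t)=\operatorname{sinc}(\pi f_s t)$, with $\operatorname{sinc}(u)=\sin(u)/u$ for $u\ne0$ and $\operatorname{sinc}(0)=1$. Then $\Gamma^K$ is amplitude lower-bounded, i.e. there is $C>0$ with $\|\Gamma^K(\bm{a},\bm{r})\|_2\ge C\sum_{k=1}^K a_k$ for all $(\bm{a},\bm{r})\in\mathbb{R}_+^K\times\mathscr{C}^K$.
   Context: $\mathbb{R}_+=[0,+\infty)$, $\|\cdot\|_2$ is the Euclidean norm. For $\bm{r}\in\mathbb{R}^3\setminus E_M$, $\gamma(\bm{r})\in\mathbb{R}^{MN}$ has components $\gamma_{m,n}(\bm{r})=\dfrac{\kappa\big(n/f_s-\|\bm{r}-\bm{r}^{\mathrm{mic}}_m\|_2/c\big)}{4\pi\|\bm{r}-\bm{r}^{\mathrm{mic}}_m\|_2}$, $1\le m\le M$, $0\le n\le N-1$. $\mathscr{C}=\bigcap_{m=1}^M\overline{B(\bm{r}^{\mathrm{mic}}_m,cT_{\max})}\setminus E_M$. $\Gamma^K(\bm{a},\bm{r})=\sum_{k=1}^K a_k\gamma(\bm{r}_k)$. *)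

theory Defs
  imports "HOL-Analysis.Analysis"
begin

definition sinc :: "real \<Rightarrow> real" where
  "sinc u = (if u = 0 then 1 else sin u / u)"

definition kappa_lp :: "real \<Rightarrow> real \<Rightarrow> real" where
  "kappa_lp fs t = sinc (pi * fs * t)"

definition gamma_comp ::
  "real \<Rightarrow> real \<Rightarrow> (real \<Rightarrow> real) \<Rightarrow> (nat \<Rightarrow> real^3) \<Rightarrow> real^3 \<Rightarrow> nat \<times> nat \<Rightarrow> real" where
  "gamma_comp c fs kappa rmic r mn =
     (let m = fst mn; n = snd mn; d = norm (r - rmic m) in
      kappa (real n / fs - d / c) / (4 * pi * d))"

definition Gamma_K ::
  "real \<Rightarrow> real \<Rightarrow> (real \<Rightarrow> real) \<Rightarrow> (nat \<Rightarrow> real^3) \<Rightarrow> nat \<Rightarrow>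
   (nat \<Rightarrow> real) \<Rightarrow> (nat \<Rightarrow> real^3) \<Rightarrow> nat \<times> nat \<Rightarrow> real" where
  "Gamma_K c fs kappa rmic K a r mn = (\<Sum>k\<in>{1..K}. a k * gamma_comp c fs kappa rmic (r k) mn)"

text \<open>Index set of R^{MN}.\<close>
definition idx :: "nat \<Rightarrow> nat \<Rightarrow> (nat \<times> nat) set" where
  "idx M N = {1..M} \<times> {0..<N}"

definition E_mics :: "nat \<Rightarrow> (nat \<Rightarrow> real^3) \<Rightarrow> (real^3) set" where
  "E_mics M rmic = rmic ` {1..M}"

definition T_max :: "real \<Rightarrow> nat \<Rightarrow> real" where
  "T_max fs N = (real N - 1) / fs"

definition calC :: "real \<Rightarrow> real \<Rightarrow> nat \<Rightarrow> nat \<Rightarrow> (nat \<Rightarrow> real^3) \<Rightarrow> (real^3) set" where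
  "calC c fs M N rmic =
     (\<Inter>m\<in>{1..M}. cball (rmic m) (c * T_max fs N)) - E_mics M rmic"

end

theory Submission
  imports Defs
begin

text \<open>
  Test \<open>\<Gamma>\<^sup>K\<close> against the fixed vector \<open>w\<close> supported on the first microphone, with
  \<open>w (1, n) = (L choose n)\<close> where \<open>L = N - 1\<close>. For a source at distance \<open>d\<close> from that
  microphone, \<open>\<langle>w, \<gamma>(r)\<rangle> = F(fs d / c) / (4 \<pi> d)\<close> with
  \<open>F(t) = \<Sum>n\<le>L. (L choose n) sinc(\<pi> (n - t))\<close>. The partial fraction expansion of
  \<open>L! / (x (x + 1) \<cdots> (x + L))\<close> turns \<open>F(t)\<close> into
  \<open>-sin(\<pi> t) / \<pi> \<cdot> L! / ((-t)(1 - t) \<cdots> (L - t))\<close> off the integers,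
  while \<open>F(j) = (L choose j)\<close>; so \<open>F\<close> has no zero on \<open>[0, L]\<close>, and as \<open>F(0) = 1\<close>
  it is bounded below there by some \<open>\<delta> > 0\<close>. Every source in \<open>calC\<close> has \<open>fs d / c \<in> [0, L]\<close>,
  so \<open>\<langle>w, \<Gamma>\<^sup>K(a, r)\<rangle> \<ge> e \<Sum>\<^sub>k a\<^sub>k\<close> for nonnegative amplitudes, and Cauchy-Schwarz
  gives the claim with \<open>C = e / \<parallel>w\<parallel>\<close>.
\<close>

lemma isCont_sinc: "isCont sinc x"
proof (cases "x = 0")
  case True
  have "sinc = (\<lambda>z. if z = 0 then 1 else sin z / z)"
    by (simp add: sinc_def fun_eq_iff)
  then show ?thesis
    unfolding True by (metis DERIV_isCont has_field_derivative_sin_z_over_z)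
next
  case False
  have "\<forall>\<^sub>F z in nhds x. sin z / z = sinc z"
    using t1_space_nhds[OF False] by eventually_elim (simp add: sinc_def)
  moreover have "isCont (\<lambda>z. sin z / z) x"
    using False by (intro continuous_intros) auto
  ultimately show ?thesis
    by (rule isCont_cong[THEN iffD1])
qed

lemma continuous_on_sinc [continuous_intros]:
  "continuous_on A f \<Longrightarrow> continuous_on A (\<lambda>x. sinc (f x))"
  using continuous_on_compose2[OF continuous_at_imp_continuous_on[OF ballI[OF isCont_sinc]]]
  by blast

lemma sinc_pi_times_of_int: "sinc (pi * of_int k) = (if k = 0 then 1 else 0)"
  by (simp add: sinc_def sin_zero_iff_int2)

lemma alternating_binomial_sum_Suc:
  fixes x :: "'a::field_char_0"
  shows "(\<Sum>k\<le>Suc n. (-1)^k * of_nat (Suc n choose k) / (x + of_nat k))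
       = (\<Sum>k\<le>n. (-1)^k * of_nat (n choose k) / (x + of_nat k))
         - (\<Sum>k\<le>n. (-1)^k * of_nat (n choose k) / (x + 1 + of_nat k))"
proof -
  let ?T = "\<Sum>k\<le>n. (-1)^k * of_nat (n choose Suc k) / (x + 1 + of_nat k)"
  \<comment> \<open>Both sums are shifted down by one index (using \<open>n choose Suc n = 0\<close> for the first);
     Pascal's rule then splits the second.\<close>
  have "(\<Sum>k\<le>n. (-1)^k * of_nat (n choose k) / (x + of_nat k))
      = (\<Sum>k\<le>Suc n. (-1)^k * of_nat (n choose k) / (x + of_nat k))"
    by simp
  also have "\<dots> = 1 / x - ?T"
    by (subst sum.atMost_Suc_shift) (simp add: sum_negf add_ac)
  finally have "(\<Sum>k\<le>n. (-1)^k * of_nat (n choose k) / (x + of_nat k)) = 1 / x - ?T" .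
  moreover have "(\<Sum>k\<le>Suc n. (-1)^k * of_nat (Suc n choose k) / (x + of_nat k))
      = 1 / x - (\<Sum>k\<le>n. (-1)^k * of_nat (n choose k) / (x + 1 + of_nat k)) - ?T"
    by (subst sum.atMost_Suc_shift)
       (simp add: add_ac ring_distribs add_divide_distrib diff_divide_distrib sum.distrib
         sum_subtractf sum_negf)
  ultimately show ?thesis
    by simp
qed

lemma alternating_binomial_partial_fractions:
  fixes x :: "'a::field_char_0"
  assumes "pochhammer x (Suc n) \<noteq> 0"
  shows "(\<Sum>k\<le>n. (-1)^k * of_nat (n choose k) / (x + of_nat k)) = fact n / pochhammer x (Suc n)"
  using assms
proof (induction n arbitrary: x)
  case 0
  then show ?case by simp
next
  case (Suc n)
  let ?P = "pochhammer x (Suc (Suc n))"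
  have P_last: "?P = (x + of_nat (Suc n)) * pochhammer x (Suc n)"
    by (rule pochhammer_rec')
  have P_first: "?P = x * pochhammer (x + 1) (Suc n)"
    by (rule pochhammer_rec)
  have "x + of_nat (Suc n) \<noteq> 0" "pochhammer x (Suc n) \<noteq> 0"
    using Suc.prems unfolding P_last by simp_all
  then have last: "fact n / pochhammer x (Suc n) = fact n * (x + of_nat (Suc n)) / ?P"
    unfolding P_last by simp
  have "x \<noteq> 0" "pochhammer (x + 1) (Suc n) \<noteq> 0"
    using Suc.prems unfolding P_first by simp_all
  then have first: "fact n / pochhammer (x + 1) (Suc n) = fact n * x / ?P"
    unfolding P_first by simp
  have "fact n * (x + of_nat (Suc n)) / ?P - fact n * x / ?P = fact (Suc n) / ?P"
    by (simp add: diff_divide_distrib[symmetric] algebra_simps)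
  then show ?case
    unfolding alternating_binomial_sum_Suc Suc.IH[OF \<open>pochhammer x (Suc n) \<noteq> 0\<close>]
      Suc.IH[OF \<open>pochhammer (x + 1) (Suc n) \<noteq> 0\<close>] last first .
qed

definition binomial_sinc_sum :: "nat \<Rightarrow> real \<Rightarrow> real" where
  "binomial_sinc_sum L t = (\<Sum>n\<le>L. real (L choose n) * sinc (pi * (real n - t)))"

lemma continuous_on_binomial_sinc_sum: "continuous_on A (binomial_sinc_sum L)"
  unfolding binomial_sinc_sum_def by (intro continuous_intros)

lemma binomial_sinc_sum_of_nat: "binomial_sinc_sum L (real j) = real (L choose j)"
proof -
  have "sinc (pi * (real n - real j)) = (if n = j then 1 else 0)" for n
    using sinc_pi_times_of_int[of "int n - int j"] by simp
  then show ?thesis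
    by (simp add: binomial_sinc_sum_def sum.delta' if_distrib[of "(*) _"] cong: if_cong)
qed

lemma binomial_sinc_sum_closed_form:
  assumes "pochhammer (- t) (Suc L) \<noteq> 0"
  shows "binomial_sinc_sum L t = - sin (pi * t) / pi * (fact L / pochhammer (- t) (Suc L))"
proof -
  have "real (L choose n) * sinc (pi * (real n - t))
      = - sin (pi * t) / pi * ((-1)^n * real (L choose n) / (- t + real n))" if "n \<le> L" for n
  proof -
    have "- t + real n \<noteq> 0"
    proof
      assume "- t + real n = 0"
      then have "- t = - of_nat n" by simp
      with assms \<open>n \<le> L\<close> show False
        unfolding pochhammer_eq_0_iff by (meson less_Suc_eq_le)
    qed
    moreover have "sin (pi * (real n - t)) = - ((-1)^n * sin (pi * t))"
      by (simp add: right_diff_distrib sin_diff)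
    ultimately show ?thesis
      by (simp add: sinc_def field_simps)
  qed
  then have "binomial_sinc_sum L t
      = - sin (pi * t) / pi * (\<Sum>n\<le>L. (-1)^n * real (L choose n) / (- t + real n))"
    unfolding binomial_sinc_sum_def sum_distrib_left by (intro sum.cong) auto
  then show ?thesis
    using alternating_binomial_partial_fractions[OF assms] by simp
qed

lemma binomial_sinc_sum_nonzero:
  assumes "0 \<le> t" "t \<le> real L"
  shows "binomial_sinc_sum L t \<noteq> 0"
proof (cases "t \<in> \<nat>")
  case True
  then obtain j where "t = real j"
    by (auto elim: Nats_cases)
  then show ?thesis
    using assms by (simp add: binomial_sinc_sum_of_nat)
next
  case False
  have "sin (pi * t) \<noteq> 0"
  proof
    assume "sin (pi * t) = 0"
    then obtain i :: int where "t = of_int i"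
      by (auto simp: sin_zero_iff_int2)
    with assms(1) False show False
      by (metis of_int_0_le_iff of_nat_nat of_nat_in_Nats)
  qed
  moreover have "pochhammer (- t) (Suc L) \<noteq> 0"
    using False by (auto simp: pochhammer_eq_0_iff)
  ultimately show ?thesis
    by (simp add: binomial_sinc_sum_closed_form)
qed

lemma binomial_sinc_sum_pos:
  assumes "0 \<le> t" "t \<le> real L"
  shows "0 < binomial_sinc_sum L t"
proof (rule ccontr)
  assume "\<not> 0 < binomial_sinc_sum L t"
  then have "binomial_sinc_sum L t \<le> 0" by simp
  moreover have "0 \<le> binomial_sinc_sum L 0"
    using binomial_sinc_sum_of_nat[of L 0] by simp
  ultimately obtain s where "0 \<le> s" "s \<le> t" "binomial_sinc_sum L s = 0"
    using IVT2'[OF _ _ assms(1) continuous_on_binomial_sinc_sum] by blast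
  with assms(2) show False
    using binomial_sinc_sum_nonzero[of s L] by simp
qed

lemma binomial_sinc_sum_uniformly_pos:
  "\<exists>\<delta>>0. \<forall>t\<in>{0..real L}. \<delta> \<le> binomial_sinc_sum L t"
proof -
  obtain t where "t \<in> {0..real L}" "\<forall>s\<in>{0..real L}. binomial_sinc_sum L t \<le> binomial_sinc_sum L s"
    using continuous_attains_inf[of "{0..real L}" "binomial_sinc_sum L"]
      continuous_on_binomial_sinc_sum by auto
  then show ?thesis
    using binomial_sinc_sum_pos[of t L] by auto
qed

lemma sum_binomial_gamma_comp_kappa_lp:
  assumes "fs \<noteq> 0"
  shows "(\<Sum>n\<le>L. real (L choose n) * gamma_comp c fs (kappa_lp fs) rmic p (m, n))
       = binomial_sinc_sum L (fs * norm (p - rmic m) / c) / (4 * pi * norm (p - rmic m))"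
proof -
  have delay: "pi * fs * (real n / fs - norm (p - rmic m) / c)
      = pi * (real n - fs * norm (p - rmic m) / c)" for n
    using assms by (simp add: right_diff_distrib)
  show ?thesis
    unfolding binomial_sinc_sum_def gamma_comp_def kappa_lp_def Let_def fst_conv snd_conv delay
      sum_divide_distrib times_divide_eq_right ..
qed

lemma calC_dist_bounds:
  assumes "p \<in> calC c fs M N rmic" "m \<in> {1..M}"
  shows "0 < norm (p - rmic m)" "norm (p - rmic m) \<le> c * T_max fs N"
  using assms by (auto simp: calC_def E_mics_def dist_norm norm_minus_commute)

lemma sum_binomial_gamma_comp_lower_bound:
  assumes "c > 0" "fs > 0" "m \<in> {1..M}"
  shows "\<exists>e>0. \<forall>p\<in>calC c fs M (Suc L) rmic.
           e \<le> (\<Sum>n\<le>L. real (L choose n) * gamma_comp c fs (kappa_lp fs) rmic p (m, n))"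
proof -
  obtain \<delta> where "\<delta> > 0" and \<delta>: "\<And>t. t \<in> {0..real L} \<Longrightarrow> \<delta> \<le> binomial_sinc_sum L t"
    using binomial_sinc_sum_uniformly_pos by blast
  \<comment> \<open>The \<open>+ 1\<close> keeps the bound positive for \<open>L = 0\<close>, where \<open>calC\<close> is empty.\<close>
  define D where "D = c * real L / fs + 1"
  have "D > 0"
    using assms by (simp add: D_def add_nonneg_pos)
  have "\<delta> / (4 * pi * D)
      \<le> (\<Sum>n\<le>L. real (L choose n) * gamma_comp c fs (kappa_lp fs) rmic p (m, n))"
    if "p \<in> calC c fs M (Suc L) rmic" for p
  proof -
    define d where "d = norm (p - rmic m)"
    have "0 < d" "d \<le> c * real L / fs"
      using calC_dist_bounds[OF that assms(3)] by (simp_all add: d_def T_max_def)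
    moreover from this have "fs * d / c \<in> {0..real L}"
      using assms by (auto simp: field_simps)
    then have "\<delta> \<le> binomial_sinc_sum L (fs * d / c)"
      by (rule \<delta>)
    ultimately have "\<delta> / (4 * pi * D) \<le> binomial_sinc_sum L (fs * d / c) / (4 * pi * d)"
      using \<open>\<delta> > 0\<close> by (intro frac_le) (auto simp: D_def)
    then show ?thesis
      using assms by (simp add: sum_binomial_gamma_comp_kappa_lp d_def)
  qed
  moreover have "\<delta> / (4 * pi * D) > 0"
    using \<open>\<delta> > 0\<close> \<open>D > 0\<close> by simp
  ultimately show ?thesis by blast
qed

lemma sum_mult_le_L2_set_mult: "(\<Sum>i\<in>A. f i * g i) \<le> L2_set f A * L2_set g A"
proof -
  have "(\<Sum>i\<in>A. f i * g i) \<le> (\<Sum>i\<in>A. \<bar>f i\<bar> * \<bar>g i\<bar>)"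
    by (rule sum_mono) (metis abs_ge_self abs_mult)
  also have "\<dots> \<le> L2_set f A * L2_set g A"
    by (rule L2_set_mult_ineq)
  finally show ?thesis .
qed

lemma sum_idx_single_mic:
  fixes v :: "nat \<Rightarrow> 'a::semiring_0"
  assumes "m \<in> {1..M}"
  shows "(\<Sum>i\<in>idx M N. (if fst i = m then v (snd i) else 0) * g i) = (\<Sum>n<N. v n * g (m, n))"
proof -
  have "(\<Sum>i\<in>idx M N. (if fst i = m then v (snd i) else 0) * g i)
      = (\<Sum>m'\<in>{1..M}. \<Sum>n\<in>{0..<N}. (if m' = m then v n else 0) * g (m', n))"
    unfolding idx_def by (simp add: sum.cartesian_product case_prod_beta)
  also have "\<dots> = (\<Sum>m'\<in>{1..M}. if m' = m then (\<Sum>n<N. v n * g (m, n)) else 0)"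
    by (intro sum.cong) (auto simp: atLeast0LessThan)
  finally show ?thesis
    using assms by simp
qed

lemma sum_mult_Gamma_K:
  "(\<Sum>i\<in>A. w i * Gamma_K c fs \<kappa> rmic K a r i)
     = (\<Sum>k\<in>{1..K}. a k * (\<Sum>i\<in>A. w i * gamma_comp c fs \<kappa> rmic (r k) i))"
  unfolding Gamma_K_def by (simp add: sum_distrib_left mult_ac) (rule sum.swap)

lemma L2_set_Gamma_K_ge_test_vector:
  assumes "0 < L2_set w A"
    and "\<And>p. p \<in> S \<Longrightarrow> e \<le> (\<Sum>i\<in>A. w i * gamma_comp c fs \<kappa> rmic p i)"
    and "\<forall>k\<in>{1..K}. a k \<ge> 0 \<and> r k \<in> S"
  shows "e / L2_set w A * (\<Sum>k\<in>{1..K}. a k) \<le> L2_set (Gamma_K c fs \<kappa> rmic K a r) A"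
proof -
  have "e * (\<Sum>k\<in>{1..K}. a k) = (\<Sum>k\<in>{1..K}. a k * e)"
    by (simp add: sum_distrib_left mult.commute)
  also have "\<dots> \<le> (\<Sum>k\<in>{1..K}. a k * (\<Sum>i\<in>A. w i * gamma_comp c fs \<kappa> rmic (r k) i))"
    using assms(2,3) by (intro sum_mono mult_left_mono) auto
  also have "\<dots> = (\<Sum>i\<in>A. w i * Gamma_K c fs \<kappa> rmic K a r i)"
    by (rule sum_mult_Gamma_K[symmetric])
  also have "\<dots> \<le> L2_set w A * L2_set (Gamma_K c fs \<kappa> rmic K a r) A"
    by (rule sum_mult_le_L2_set_mult)
  finally show ?thesis
    using assms(1) by (simp add: pos_divide_le_eq mult.commute)
qed

theorem corollary1:
  fixes c fs :: real and M N K :: nat and rmic :: "nat \<Rightarrow> real^3"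
  assumes "c > 0" and "fs > 0" and "M \<ge> 1" and "N \<ge> 1" and "K \<ge> 1"
  shows "\<exists>C>0. \<forall>(a :: nat \<Rightarrow> real) (r :: nat \<Rightarrow> real^3).
           (\<forall>k\<in>{1..K}. a k \<ge> 0 \<and> r k \<in> calC c fs M N rmic) \<longrightarrow>
           L2_set (Gamma_K c fs (kappa_lp fs) rmic K a r) (idx M N) \<ge> C * (\<Sum>k\<in>{1..K}. a k)"
proof -
  obtain L where N: "N = Suc L"
    using \<open>N \<ge> 1\<close> by (cases N) auto
  have mic: "1 \<in> {1..M}"
    using \<open>M \<ge> 1\<close> by simp
  define w :: "nat \<times> nat \<Rightarrow> real" where "w i = (if fst i = 1 then real (L choose snd i) else 0)" for i
  have pairing: "(\<Sum>i\<in>idx M N. w i * gamma_comp c fs (kappa_lp fs) rmic p i)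
      = (\<Sum>n\<le>L. real (L choose n) * gamma_comp c fs (kappa_lp fs) rmic p (1, n))" for p
    unfolding w_def sum_idx_single_mic[OF mic, where v = "\<lambda>n. real (L choose n)"] N
      lessThan_Suc_atMost ..
  obtain e where "e > 0" and "\<forall>p\<in>calC c fs M N rmic.
      e \<le> (\<Sum>n\<le>L. real (L choose n) * gamma_comp c fs (kappa_lp fs) rmic p (1, n))"
    using sum_binomial_gamma_comp_lower_bound[OF assms(1,2) mic] unfolding N by blast
  then have e: "e \<le> (\<Sum>i\<in>idx M N. w i * gamma_comp c fs (kappa_lp fs) rmic p i)"
    if "p \<in> calC c fs M N rmic" for p
    using that by (simp add: pairing)
  have "1 \<le> L2_set w (idx M N)"
    using member_le_L2_set[of "idx M N" "(1, 0)" w] mic by (simp add: idx_def N w_def)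
  then have "0 < L2_set w (idx M N)" by simp
  with \<open>e > 0\<close> show ?thesis
    using L2_set_Gamma_K_ge_test_vector[OF _ e] by (metis divide_pos_pos)
qed

end
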